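(* Let $(\{U_\alpha\},\{W_\beta\})$ be a solution of the combined $(\mathrm{sl}_n(\mathbb{C}),\mathfrak{t})$-hierarchy, and set $B_{m\alpha}:=\pi_{\geqslant0}(U_\alpha z^m)$ for $m\ge0$ and $C_{m\beta}:=\pi_{<0}(W_\beta z^{m+1})$ for $m<0$. Then for all $\alpha_1,\alpha_2,\beta_1,\beta_2\in\{1,\dots,r\}$: $$\partial_{m_1\beta_1}(B_{m_2\alpha_2})-\partial_{m_2\alpha_2}(C_{m_1\beta_1})-[C_{m_1\beta_1},B_{m_2\alpha_2}]=0\quad (m_1<0,\ m_2\ge0),$$ $$\partial_{m_1\alpha_1}(B_{m_2\alpha_2})-\partial_{m_2\alpha_2}(B_{m_1\alpha_1})-[B_{m_1\alpha_1},B_{m_2\alpha_2}]=0\quad (m_1,m_2\ge0),$$ $$\partial_{m_1\beta_1}(C_{m_2\beta_2})-\partial_{m_2\beta_2}(C_{m_1\beta_1})-[C_{m_1\beta_1},C_{m_2\beta_2}]=0\quad (m_1,m_2<0).$$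
   Context: $R$ is a commutative $\mathbb{C}$-algebra with commuting $\mathbb{C}$-linear derivations $\partial_{m\alpha}$, $m\in\mathbb{Z}$, $1\le\alpha\le r$, acting coefficientwise on matrices and on series. $\mathrm{gl}_n(R)[z,z^{-1})$ consists of formal series $\sum_{i=-\infty}^{N}X_iz^i$ and $\mathrm{gl}_n(R)[z^{-1},z)$ of formal series $\sum_{i=-N}^{\infty}X_iz^i$ ($X_i\in\mathrm{gl}_n(R)$), both with bracket $[X,Y]=\sum[X_i,Y_j]z^{i+j}$; $\mathrm{sl}_n$ versions have traceless coefficients. $\pi_{\geqslant0}$ (resp. $\pi_{<0}$) keeps the terms with $i\ge0$ (resp. $i<0$). $\mathfrak{t}\subset\mathrm{sl}_n(\mathbb{C})$ is commutative of maximal dimension $r$, basis $E_1,\dots,E_r$. $G_{<0}=\{\mathrm{Id}+\sum_{i\ge1}Y_iz^{-i}\mid Y_i\in\mathrm{gl}_n(R)\}$; $G_{\geqslant0}=\{X_0+\sum_{i\ge1}X_iz^i\mid X_i\in\mathrm{gl}_n(R),\ X_0\text{ invertible}\}$. A deformation $(\{U_\alpha\},\{W_\beta\})$ means $U_\alpha=gE_\alpha g^{-1}$ ($1\le\alpha\le r$) for some $g\in G_{<0}$ and $W_\beta=XE_\beta z^{-1}X^{-1}$ ($1\le\beta\le r$) for some $X\in G_{\geqslant0}$. It is a solution of the combined $(\mathrm{sl}_n(\mathbb{C}),\mathfrak{t})$-hierarchy if: for all $m\ge0$ and all $\alpha_1,\alpha_2,\beta$: $\partial_{m\alpha_1}(U_{\alpha_2})=[\pi_{\geqslant0}(U_{\alpha_1}z^m),U_{\alpha_2}]$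 and $\partial_{m\alpha_1}(W_\beta)=[\pi_{\geqslant0}(U_{\alpha_1}z^m),W_\beta]$; and for all $m<0$ and all $\beta_1,\beta_2,\alpha$: $\partial_{m\beta_1}(W_{\beta_2})=[\pi_{<0}(W_{\beta_1}z^{m+1}),W_{\beta_2}]$ and $\partial_{m\beta_1}(U_\alpha)=[\pi_{<0}(W_{\beta_1}z^{m+1}),U_\alpha]$. (Here $\pi_{\geqslant0}(U z^m)$ is a polynomial in $z$ and $\pi_{<0}(Wz^{m+1})$ a polynomial in $z^{-1}$, so all brackets are well defined.) *)

theory Defs
  imports Complex_Main
begin

(* n x n matrices over a ring, indexed by a finite type 'n (n = CARD('n)) *)
type_synonym ('a,'n) mat = "'n \<Rightarrow> 'n \<Rightarrow> 'a"

(* formal series sum_i X_i z^i, represented by the coefficient function i \<mapsto> X_i *)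
type_synonym ('a,'n) ser = "int \<Rightarrow> ('a,'n) mat"

definition mzero :: "('a::zero,'n) mat" where "mzero = (\<lambda>i j. 0)"
definition mone :: "('a::{zero,one},'n) mat" where "mone = (\<lambda>i j. if i = j then 1 else 0)"
definition mmul :: "('a::comm_ring_1,'n::finite) mat \<Rightarrow> ('a,'n) mat \<Rightarrow> ('a,'n) mat" where
  "mmul A B = (\<lambda>i j. \<Sum>k\<in>UNIV. A i k * B k j)"
definition mbracket :: "('a::comm_ring_1,'n::finite) mat \<Rightarrow> ('a,'n) mat \<Rightarrow> ('a,'n) mat" where
  "mbracket A B = (\<lambda>i j. mmul A B i j - mmul B A i j)"
definition mtrace :: "('a::comm_ring_1,'n::finite) mat \<Rightarrow> 'a" where
  "mtrace A = (\<Sum>i\<in>UNIV. A i i)"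

(* product of series: coefficient k is sum_i X_i Y_{k-i}, over the (in all uses finite)
   set of i where both factors are nonzero *)
definition smul :: "('a::comm_ring_1,'n::finite) ser \<Rightarrow> ('a,'n) ser \<Rightarrow> ('a,'n) ser" where
  "smul S T = (\<lambda>k a b. \<Sum>i\<in>{i. S i \<noteq> mzero \<and> T (k - i) \<noteq> mzero}. mmul (S i) (T (k - i)) a b)"
definition sbracket :: "('a::comm_ring_1,'n::finite) ser \<Rightarrow> ('a,'n) ser \<Rightarrow> ('a,'n) ser" where
  "sbracket S T = (\<lambda>k a b. smul S T k a b - smul T S k a b)"
definition sdiff :: "('a::comm_ring_1,'n) ser \<Rightarrow> ('a,'n) ser \<Rightarrow> ('a,'n) ser" where
  "sdiff S T = (\<lambda>k a b. S k a b - T k a b)"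
definition szero :: "('a::zero,'n) ser" where "szero = (\<lambda>k. mzero)"
definition sone :: "('a::{zero,one},'n) ser" where "sone = (\<lambda>k. if k = 0 then mone else mzero)"
definition sconst :: "('a::zero,'n) mat \<Rightarrow> ('a,'n) ser" where
  "sconst X = (\<lambda>k. if k = 0 then X else mzero)"
(* S z^m *)
definition sshift :: "('a,'n) ser \<Rightarrow> int \<Rightarrow> ('a,'n) ser" where
  "sshift S m = (\<lambda>k. S (k - m))"
definition pi_ge0 :: "('a::zero,'n) ser \<Rightarrow> ('a,'n) ser" where
  "pi_ge0 S = (\<lambda>k. if k \<ge> 0 then S k else mzero)"
definition pi_lt0 :: "('a::zero,'n) ser \<Rightarrow> ('a,'n) ser" where
  "pi_lt0 S = (\<lambda>k. if k < 0 then S k else mzero)"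
definition sapply :: "('a \<Rightarrow> 'a) \<Rightarrow> ('a,'n) ser \<Rightarrow> ('a,'n) ser" where
  "sapply d S = (\<lambda>k a b. d (S k a b))"
definition cmat :: "(complex \<Rightarrow> 'a) \<Rightarrow> (complex,'n) mat \<Rightarrow> ('a,'n) mat" where
  "cmat emb E = (\<lambda>i j. emb (E i j))"

(* R is a commutative C-algebra: structure ring homomorphism emb : C \<rightarrow> R *)
definition C_algebra_map :: "(complex \<Rightarrow> 'a::comm_ring_1) \<Rightarrow> bool" where
  "C_algebra_map emb \<longleftrightarrow> emb 1 = 1 \<and> (\<forall>x y. emb (x + y) = emb x + emb y) \<and>
     (\<forall>x y. emb (x * y) = emb x * emb y)"

definition C_derivation :: "(complex \<Rightarrow> 'a::comm_ring_1) \<Rightarrow> ('a \<Rightarrow> 'a) \<Rightarrow> bool" where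
  "C_derivation emb d \<longleftrightarrow> (\<forall>x y. d (x + y) = d x + d y) \<and>
     (\<forall>c x. d (emb c * x) = emb c * d x) \<and> (\<forall>x y. d (x * y) = x * d y + d x * y)"

(* F_1..F_k: pairwise commuting, traceless, C-linearly independent complex matrices,
   i.e. a basis of a k-dimensional commutative Lie subalgebra of sl_n(C) *)
definition comm_sl_basis :: "(nat \<Rightarrow> (complex,'n::finite) mat) \<Rightarrow> nat \<Rightarrow> bool" where
  "comm_sl_basis F k \<longleftrightarrow>
     (\<forall>a\<in>{1..k}. mtrace (F a) = 0) \<and>
     (\<forall>a\<in>{1..k}. \<forall>b\<in>{1..k}. mmul (F a) (F b) = mmul (F b) (F a)) \<and>
     (\<forall>c :: nat \<Rightarrow> complex. (\<forall>i j. (\<Sum>a=1..k. c a * F a i j) = 0) \<longrightarrow> (\<forall>a\<in>{1..k}. c a = 0))"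

(* E_1..E_r basis of t, commutative subalgebra of sl_n(C) of maximal dimension r *)
definition max_comm_basis :: "(nat \<Rightarrow> (complex,'n::finite) mat) \<Rightarrow> nat \<Rightarrow> bool" where
  "max_comm_basis E r \<longleftrightarrow> comm_sl_basis E r \<and>
     (\<forall>(F :: nat \<Rightarrow> (complex,'n) mat) k. comm_sl_basis F k \<longrightarrow> k \<le> r)"

definition G_lt0 :: "('a::comm_ring_1,'n::finite) ser \<Rightarrow> bool" where
  "G_lt0 g \<longleftrightarrow> g 0 = mone \<and> (\<forall>i>0. g i = mzero)"

definition G_ge0 :: "('a::comm_ring_1,'n::finite) ser \<Rightarrow> bool" where
  "G_ge0 X \<longleftrightarrow> (\<forall>i<0. X i = mzero) \<and> (\<exists>Y. mmul (X 0) Y = mone \<and> mmul Y (X 0) = mone)"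

definition deformation ::
  "(complex \<Rightarrow> 'a::comm_ring_1) \<Rightarrow> (nat \<Rightarrow> (complex,'n::finite) mat) \<Rightarrow> nat \<Rightarrow>
   (nat \<Rightarrow> ('a,'n) ser) \<Rightarrow> (nat \<Rightarrow> ('a,'n) ser) \<Rightarrow> bool" where
  "deformation emb E r U W \<longleftrightarrow>
     (\<exists>g ginv. G_lt0 g \<and> G_lt0 ginv \<and> smul g ginv = sone \<and> smul ginv g = sone \<and>
        (\<forall>a\<in>{1..r}. U a = smul (smul g (sconst (cmat emb (E a)))) ginv)) \<and>
     (\<exists>X Xinv. G_ge0 X \<and> G_ge0 Xinv \<and> smul X Xinv = sone \<and> smul Xinv X = sone \<and>
        (\<forall>b\<in>{1..r}. W b = smul (smul X (sshift (sconst (cmat emb (E b))) (-1))) Xinv))"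

definition hierarchy_solution ::
  "(complex \<Rightarrow> 'a::comm_ring_1) \<Rightarrow> (int \<Rightarrow> nat \<Rightarrow> 'a \<Rightarrow> 'a) \<Rightarrow> (nat \<Rightarrow> (complex,'n::finite) mat) \<Rightarrow> nat \<Rightarrow>
   (nat \<Rightarrow> ('a,'n) ser) \<Rightarrow> (nat \<Rightarrow> ('a,'n) ser) \<Rightarrow> bool" where
  "hierarchy_solution emb D E r U W \<longleftrightarrow> deformation emb E r U W \<and>
     (\<forall>m\<ge>0. \<forall>a1\<in>{1..r}. \<forall>a2\<in>{1..r}.
        sapply (D m a1) (U a2) = sbracket (pi_ge0 (sshift (U a1) m)) (U a2)) \<and>
     (\<forall>m\<ge>0. \<forall>a1\<in>{1..r}. \<forall>b\<in>{1..r}.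
        sapply (D m a1) (W b) = sbracket (pi_ge0 (sshift (U a1) m)) (W b)) \<and>
     (\<forall>m<0. \<forall>b1\<in>{1..r}. \<forall>b2\<in>{1..r}.
        sapply (D m b1) (W b2) = sbracket (pi_lt0 (sshift (W b1) (m + 1))) (W b2)) \<and>
     (\<forall>m<0. \<forall>b1\<in>{1..r}. \<forall>a\<in>{1..r}.
        sapply (D m b1) (U a) = sbracket (pi_lt0 (sshift (W b1) (m + 1))) (U a))"

end

theory Submission
  imports Defs "HOL-Computational_Algebra.Formal_Laurent_Series"
begin

text \<open>The zero-curvature equations are the compatibility conditions of the Lax equations. Shifts
  and projections commute with the flows, so for instance the derivative of \<open>B m2 a2\<close> along the flow
  \<open>(m1, a1)\<close> is \<open>\<pi>\<^sub>\<ge>\<^sub>0 [B m1 a1, Y]\<close> with \<open>Y = U a2 z^m2\<close>. Write every series as \<open>P X + N X\<close>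
  (nonnegative and negative degrees). In a degree \<open>k \<ge> 0\<close> the left-hand side of the equation for two
  \<open>B\<close>'s is then the coefficient of \<open>[X, Y] - [N X, N Y]\<close>, with \<open>X = U a1 z^m1\<close>; the second bracket
  lives in negative degrees and the first vanishes because \<open>X\<close> and \<open>Y\<close> commute. The equation for two
  \<open>C\<close>'s is the same argument with the two halves of the degrees exchanged, and in the mixed equation
  the terms cancel without any commutativity. The \<open>U a\<close> commute because they are conjugates
  \<open>g E a g\<^sup>-\<^sup>1\<close> of commuting constants by a single series; this is a computation in the ring of
  formal Laurent series over the matrix ring, after reflecting \<open>z \<mapsto> z\<^sup>-\<^sup>1\<close> since \<open>g\<close> has no positive
  powers. Likewise for the \<open>W b\<close>.\<close>

unbundle fps_syntax

lemma mzero_apply [simp]: "mzero i j = 0"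
  by (simp add: mzero_def)

lemma mmul_assoc: "mmul (mmul A B) C = mmul A (mmul B C)"
  unfolding mmul_def
  by (auto simp: sum_distrib_left sum_distrib_right mult.assoc intro!: ext sum.swap[THEN trans] sum.cong)

lemma mmul_mone_left [simp]: "mmul mone A = A"
  unfolding mmul_def mone_def by (auto intro!: ext simp: if_distrib[where f="\<lambda>x. x * _"] cong: if_cong)

lemma mmul_mone_right [simp]: "mmul A mone = A"
  unfolding mmul_def mone_def by (auto intro!: ext simp: if_distrib[where f="\<lambda>x. _ * x"] cong: if_cong)

lemma mmul_mzero_left [simp]: "mmul mzero A = mzero"
  unfolding mmul_def mzero_def by auto

lemma mmul_mzero_right [simp]: "mmul A mzero = mzero"
  unfolding mmul_def mzero_def by auto

lemma mmul_add_left: "mmul (\<lambda>i j. A i j + B i j) C = (\<lambda>i j. mmul A C i j + mmul B C i j)"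
  unfolding mmul_def by (auto simp: algebra_simps sum.distrib)

lemma mmul_add_right: "mmul C (\<lambda>i j. A i j + B i j) = (\<lambda>i j. mmul C A i j + mmul C B i j)"
  unfolding mmul_def by (auto simp: algebra_simps sum.distrib)

text \<open>A copy of the matrix type whose ring product is the matrix product (the function type
  itself would carry the pointwise one), so that series become formal Laurent series over it.\<close>

typedef ('a,'n) mat_ring = "UNIV :: ('a,'n) mat set" by simp

lemmas mat_ring_simps = Abs_mat_ring_inverse[OF UNIV_I] Rep_mat_ring_inverse
  Abs_mat_ring_inject[OF UNIV_I UNIV_I]

instantiation mat_ring :: (comm_ring_1, finite) ring_1
begin
definition "0 = Abs_mat_ring mzero"
definition "1 = Abs_mat_ring mone"
definition "x + y = Abs_mat_ring (\<lambda>i j. Rep_mat_ring x i j + Rep_mat_ring y i j)"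
definition "x - y = Abs_mat_ring (\<lambda>i j. Rep_mat_ring x i j - Rep_mat_ring y i j)"
definition "- x = Abs_mat_ring (\<lambda>i j. - Rep_mat_ring x i j)"
definition "x * y = Abs_mat_ring (mmul (Rep_mat_ring x) (Rep_mat_ring y))"
instance
proof
  fix a b c :: "('a,'b) mat_ring"
  show "a * b * c = a * (b * c)" by (simp add: times_mat_ring_def mat_ring_simps mmul_assoc)
  show "1 * a = a" by (simp add: times_mat_ring_def one_mat_ring_def mat_ring_simps)
  show "a * 1 = a" by (simp add: times_mat_ring_def one_mat_ring_def mat_ring_simps)
  show "(a + b) * c = a * c + b * c"
    by (simp add: times_mat_ring_def plus_mat_ring_def mat_ring_simps mmul_add_left)
  show "a * (b + c) = a * b + a * c"
    by (simp add: times_mat_ring_def plus_mat_ring_def mat_ring_simps mmul_add_right)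
  show "a + b + c = a + (b + c)" by (simp add: plus_mat_ring_def mat_ring_simps add.assoc)
  show "a + b = b + a" by (simp add: plus_mat_ring_def mat_ring_simps add.commute)
  show "0 + a = a" by (simp add: plus_mat_ring_def zero_mat_ring_def mat_ring_simps mzero_def)
  show "- a + a = 0"
    by (simp add: plus_mat_ring_def zero_mat_ring_def uminus_mat_ring_def mat_ring_simps mzero_def)
  show "a - b = a + - b" by (simp add: plus_mat_ring_def minus_mat_ring_def uminus_mat_ring_def mat_ring_simps)
  show "(0::('a,'b) mat_ring) \<noteq> 1"
    by (auto simp: zero_mat_ring_def one_mat_ring_def mat_ring_simps mzero_def mone_def fun_eq_iff)
qed
end

lemma Abs_mat_ring_eq_0_iff: "Abs_mat_ring X = 0 \<longleftrightarrow> X = mzero"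
  by (simp add: zero_mat_ring_def mat_ring_simps)

lemma sum_Abs_mat_ring:
  "finite A \<Longrightarrow> (\<Sum>i\<in>A. Abs_mat_ring (f i)) =
     (Abs_mat_ring (\<lambda>a b. \<Sum>i\<in>A. f i a b) :: ('a::comm_ring_1,'n::finite) mat_ring)"
  by (induction A rule: finite_induct) (auto simp: zero_mat_ring_def mzero_def plus_mat_ring_def mat_ring_simps)

lemma smul_eq_sum:
  assumes "finite A" "\<And>i. S i \<noteq> mzero \<Longrightarrow> T (k - i) \<noteq> mzero \<Longrightarrow> i \<in> A"
  shows "smul S T k a b = (\<Sum>i\<in>A. mmul (S i) (T (k - i)) a b)"
  unfolding smul_def by (rule sum.mono_neutral_left[OF assms(1)]) (use assms(2) in auto)

lemma smul_eq_mzero: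
  assumes "\<And>i. S i \<noteq> mzero \<Longrightarrow> T (k - i) \<noteq> mzero \<Longrightarrow> False"
  shows "smul S T k = mzero"
  using smul_eq_sum[of "{}" S T k] assms by (auto simp: mzero_def)

definition bounded_below :: "('a::zero,'n) ser \<Rightarrow> bool" where
  "bounded_below S \<longleftrightarrow> (\<exists>N. \<forall>i<N. S i = mzero)"

definition bounded_above :: "('a::zero,'n) ser \<Rightarrow> bool" where
  "bounded_above S \<longleftrightarrow> (\<exists>N. \<forall>i>N. S i = mzero)"

lemma bounded_below_smul [simp]:
  assumes "bounded_below S" "bounded_below T"
  shows "bounded_below (smul S T)"
proof -
  obtain N1 N2 where N: "\<forall>i<N1. S i = mzero" "\<forall>i<N2. T i = mzero"
    using assms unfolding bounded_below_def by blast
  have "smul S T k = mzero" if "k < N1 + N2" for k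
  proof (rule smul_eq_mzero)
    fix i assume "S i \<noteq> mzero" "T (k - i) \<noteq> mzero"
    then have "N1 \<le> i" "N2 \<le> k - i" using N by (meson not_less)+
    then show False using that by linarith
  qed
  then show ?thesis unfolding bounded_below_def by blast
qed

lemma bounded_below_sconst [simp]: "bounded_below (sconst A)"
  unfolding bounded_below_def sconst_def by auto

lemma bounded_below_sshift [simp]: "bounded_below (sshift S m) \<longleftrightarrow> bounded_below S"
proof
  assume "bounded_below (sshift S m)"
  then obtain N where N: "\<forall>i<N. S (i - m) = mzero" unfolding bounded_below_def sshift_def by blast
  have "S j = mzero" if "j < N - m" for j
    using N[rule_format, of "j + m"] that by simp
  then show "bounded_below S" unfolding bounded_below_def by blast
next
  assume "bounded_below S"
  then obtain N where N: "\<forall>i<N. S i = mzero" unfolding bounded_below_def by blast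
  then have "\<forall>i<N + m. sshift S m i = mzero" by (simp add: sshift_def)
  then show "bounded_below (sshift S m)" unfolding bounded_below_def by blast
qed

lemma bounded_above_sshift [simp]: "bounded_above (sshift S m) \<longleftrightarrow> bounded_above S"
proof
  assume "bounded_above (sshift S m)"
  then obtain N where N: "\<forall>i>N. S (i - m) = mzero" unfolding bounded_above_def sshift_def by blast
  have "S j = mzero" if "j > N - m" for j
    using N[rule_format, of "j + m"] that by simp
  then show "bounded_above S" unfolding bounded_above_def by blast
next
  assume "bounded_above S"
  then obtain N where N: "\<forall>i>N. S i = mzero" unfolding bounded_above_def by blast
  then have "\<forall>i>N + m. sshift S m i = mzero" by (simp add: sshift_def)
  then show "bounded_above (sshift S m)" unfolding bounded_above_def by blast
qed

lemma bounded_below_sone [simp]: "bounded_below sone"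
  unfolding bounded_below_def sone_def by auto

definition ser_to_fls :: "('a::comm_ring_1,'n::finite) ser \<Rightarrow> ('a,'n) mat_ring fls" where
  "ser_to_fls S = Abs_fls (\<lambda>k. Abs_mat_ring (S k))"

lemma ser_to_fls_nth: "bounded_below S \<Longrightarrow> ser_to_fls S $$ k = Abs_mat_ring (S k)"
  unfolding ser_to_fls_def bounded_below_def
  by (elim exE, rule nth_Abs_fls_lower_bound) (auto simp: zero_mat_ring_def)

lemma ser_to_fls_inject:
  "bounded_below S \<Longrightarrow> bounded_below T \<Longrightarrow> ser_to_fls S = ser_to_fls T \<longleftrightarrow> S = T"
  by (metis ext ser_to_fls_nth mat_ring_simps(3))

lemma ser_to_fls_smul:
  assumes S: "bounded_below S" and T: "bounded_below T"
  shows "ser_to_fls (smul S T) = ser_to_fls S * ser_to_fls T"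
proof (rule fls_eqI)
  fix n
  define df where "df = fls_subdegree (ser_to_fls S)"
  define dg where "dg = fls_subdegree (ser_to_fls T)"
  have window: "smul S T n = (\<lambda>a b. \<Sum>i\<in>{df..n-dg}. mmul (S i) (T (n - i)) a b)"
  proof (intro ext smul_eq_sum)
    fix i assume "S i \<noteq> mzero" "T (n - i) \<noteq> mzero"
    then have "ser_to_fls S $$ i \<noteq> 0" "ser_to_fls T $$ (n - i) \<noteq> 0"
      using ser_to_fls_nth[OF S] ser_to_fls_nth[OF T] Abs_mat_ring_eq_0_iff by auto
    then have "df \<le> i" "dg \<le> n - i" unfolding df_def dg_def by (auto intro: fls_subdegree_leI)
    then show "i \<in> {df..n-dg}" by auto
  qed simp
  have "(ser_to_fls S * ser_to_fls T) $$ n = (\<Sum>i=df..n - dg. ser_to_fls S $$ i * ser_to_fls T $$ (n - i))"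
    unfolding df_def dg_def by (rule fls_times_nth(2))
  also have "\<dots> = Abs_mat_ring (smul S T n)"
    by (simp add: ser_to_fls_nth[OF S] ser_to_fls_nth[OF T] times_mat_ring_def mat_ring_simps
        sum_Abs_mat_ring window)
  also have "\<dots> = ser_to_fls (smul S T) $$ n" by (simp add: ser_to_fls_nth S T)
  finally show "ser_to_fls (smul S T) $$ n = (ser_to_fls S * ser_to_fls T) $$ n" by simp
qed

lemma ser_to_fls_sone: "ser_to_fls (sone :: ('a::comm_ring_1,'n::finite) ser) = 1"
  by (rule fls_eqI)
    (simp add: ser_to_fls_nth[OF bounded_below_sone], simp add: sone_def one_mat_ring_def zero_mat_ring_def)

lemma conj_mult_commute:
  fixes g g' p q :: "'a::monoid_mult"
  assumes inv: "g' * g = 1" and pq: "p * q = q * p"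
  shows "(g * p * g') * (g * q * g') = (g * q * g') * (g * p * g')"
proof -
  have cancel: "g' * (g * x) = x" for x
    by (metis inv mult.assoc mult_1_left)
  have "(g * p * g') * (g * q * g') = g * (p * q) * g'"
    by (simp add: mult.assoc cancel)
  also have "\<dots> = (g * q * g') * (g * p * g')"
    by (simp add: mult.assoc cancel pq flip: mult.assoc[of p q])
  finally show ?thesis .
qed

lemma smul_conj_commute:
  assumes bdd: "bounded_below G" "bounded_below G'" "bounded_below P" "bounded_below Q"
    and inv: "smul G' G = sone" and PQ: "smul P Q = smul Q P"
  shows "smul (smul (smul G P) G') (smul (smul G Q) G') = smul (smul (smul G Q) G') (smul (smul G P) G')"
proof -
  have fls: "ser_to_fls (smul (smul (smul G X) G') (smul (smul G Y) G')) =
      ser_to_fls G * ser_to_fls X * ser_to_fls G' * (ser_to_fls G * ser_to_fls Y * ser_to_fls G')"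
    if "bounded_below X" "bounded_below Y" for X Y
    using bdd that by (simp add: ser_to_fls_smul)
  have "ser_to_fls G' * ser_to_fls G = 1" "ser_to_fls P * ser_to_fls Q = ser_to_fls Q * ser_to_fls P"
    using inv PQ bdd by (metis ser_to_fls_smul ser_to_fls_sone)+
  then have "ser_to_fls (smul (smul (smul G P) G') (smul (smul G Q) G'))
      = ser_to_fls (smul (smul (smul G Q) G') (smul (smul G P) G'))"
    unfolding fls[OF bdd(3,4)] fls[OF bdd(4,3)] by (rule conj_mult_commute)
  then show ?thesis
    using bdd by (simp add: ser_to_fls_inject)
qed

definition sreflect :: "('a,'n) ser \<Rightarrow> ('a,'n) ser" where
  "sreflect S = (\<lambda>k. S (- k))"

lemma sreflect_sreflect [simp]: "sreflect (sreflect S) = S"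
  by (simp add: sreflect_def)

lemma smul_sreflect: "smul (sreflect S) (sreflect T) = sreflect (smul S T)"
  unfolding smul_def sreflect_def
proof (intro ext)
  fix k a b
  show "(\<Sum>i\<in>{i. S (- i) \<noteq> mzero \<and> T (- (k - i)) \<noteq> mzero}. mmul (S (- i)) (T (- (k - i))) a b) =
        (\<Sum>i\<in>{i. S i \<noteq> mzero \<and> T (- k - i) \<noteq> mzero}. mmul (S i) (T (- k - i)) a b)"
    by (rule sum.reindex_bij_witness[of _ uminus uminus]) (auto simp: minus_diff_commute)
qed

lemma sreflect_sconst [simp]: "sreflect (sconst A) = sconst A"
  by (auto simp: sreflect_def sconst_def)

lemma sreflect_sone [simp]: "sreflect sone = sone"
  by (auto simp: sreflect_def sone_def)

lemma bounded_above_iff_sreflect: "bounded_above S \<longleftrightarrow> bounded_below (sreflect S)"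
  unfolding bounded_above_def bounded_below_def sreflect_def
  by (metis minus_less_iff minus_minus)

lemma bounded_above_smul [simp]: "bounded_above S \<Longrightarrow> bounded_above T \<Longrightarrow> bounded_above (smul S T)"
  by (simp add: bounded_above_iff_sreflect flip: smul_sreflect)

lemma bounded_above_sconst [simp]: "bounded_above (sconst A)"
  by (simp add: bounded_above_iff_sreflect)

lemma smul_sshift: "smul (sshift S m) (sshift T n) = sshift (smul S T) (m + n)"
proof -
  have "smul (sshift S m) (sshift T n) k = smul S T (k - (m + n))" for k
    unfolding smul_def sshift_def
    by (intro ext, rule sum.reindex_bij_witness[of _ "\<lambda>i. i + m" "\<lambda>i. i - m"]) (auto simp: algebra_simps)
  then show ?thesis by (auto simp: sshift_def)
qed

lemma sbracket_sshift_right: "sbracket S (sshift T m) = sshift (sbracket S T) m"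
proof -
  have "smul S (sshift T m) = sshift (smul S T) m" "smul (sshift T m) S = sshift (smul T S) m"
    using smul_sshift[of S 0 T m] smul_sshift[of T m S 0] by (simp_all add: sshift_def)
  then show ?thesis by (simp add: sbracket_def sshift_def)
qed

lemma smul_sconst: "smul (sconst A) (sconst B) = sconst (mmul A B)"
proof (intro ext)
  fix k a b
  have "smul (sconst A) (sconst B) k a b = (\<Sum>i\<in>{0}. mmul (sconst A i) (sconst B (k - i)) a b)"
    by (rule smul_eq_sum) (auto simp: sconst_def split: if_splits)
  then show "smul (sconst A) (sconst B) k a b = sconst (mmul A B) k a b"
    by (simp add: sconst_def)
qed

definition srestrict :: "int set \<Rightarrow> ('a::zero,'n) ser \<Rightarrow> ('a,'n) ser" where
  "srestrict K S = (\<lambda>k. if k \<in> K then S k else mzero)"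

lemma srestrict_in [simp]: "k \<in> K \<Longrightarrow> srestrict K S k = S k"
  and srestrict_notin [simp]: "k \<notin> K \<Longrightarrow> srestrict K S k = mzero"
  by (simp_all add: srestrict_def)

lemma pi_ge0_eq_srestrict: "pi_ge0 = srestrict {0..}"
  by (auto simp: pi_ge0_def srestrict_def)

lemma pi_lt0_eq_srestrict: "pi_lt0 = srestrict (- {0..})"
  by (auto simp: pi_lt0_def srestrict_def)

definition add_closed :: "'a::plus set \<Rightarrow> bool" where
  "add_closed K \<longleftrightarrow> (\<forall>i\<in>K. \<forall>j\<in>K. i + j \<in> K)"

lemma add_closed_nonneg: "add_closed {0::int..}"
  and add_closed_neg: "add_closed (- {0::int..})"
  by (auto simp: add_closed_def)

lemma smul_srestrict_eq_mzero:
  assumes "add_closed K" "k \<notin> K"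
  shows "smul (srestrict K S) (srestrict K T) k = mzero"
  by (rule smul_eq_mzero) (use assms in \<open>force simp: add_closed_def srestrict_def split: if_splits\<close>)

text \<open>\<^const>\<open>smul\<close> sums over a possibly infinite index set, on which \<^const>\<open>sum\<close> returns \<open>0\<close>;
  splitting a coefficient into parts is only valid where that set is finite.\<close>

definition smul_finite :: "('a::zero,'n) ser \<Rightarrow> ('a,'n) ser \<Rightarrow> int \<Rightarrow> bool" where
  "smul_finite S T k \<longleftrightarrow> finite {i. S i \<noteq> mzero \<and> T (k - i) \<noteq> mzero}"

lemma smul_finite_commute:
  assumes "smul_finite S T k"
  shows "smul_finite T S k"
proof -
  have "{i. T i \<noteq> mzero \<and> S (k - i) \<noteq> mzero} = (\<lambda>i. k - i) ` {i. S i \<noteq> mzero \<and> T (k - i) \<noteq> mzero}"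
    by (auto simp: image_iff intro!: exI[of _ "k - _"])
  then show ?thesis using assms by (simp add: smul_finite_def)
qed

lemma smul_finite_srestrict:
  assumes "smul_finite S T k"
  shows "smul_finite (srestrict K S) T k" "smul_finite S (srestrict K T) k"
  using assms unfolding smul_finite_def
  by (auto elim!: rev_finite_subset simp: srestrict_def split: if_splits)

lemma smul_finite_sshift:
  assumes "smul_finite S T (k - m - n)"
  shows "smul_finite (sshift S m) (sshift T n) k"
proof -
  have "{i. sshift S m i \<noteq> mzero \<and> sshift T n (k - i) \<noteq> mzero}
      = (\<lambda>i. i + m) ` {i. S i \<noteq> mzero \<and> T (k - m - n - i) \<noteq> mzero}"
    by (auto simp: sshift_def image_iff algebra_simps intro!: exI[of _ "_ - m"])
  then show ?thesis using assms by (simp add: smul_finite_def)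
qed

lemma smul_finite_bounded_below:
  assumes "bounded_below S" "bounded_below T"
  shows "smul_finite S T k"
proof -
  obtain N1 N2 where "\<forall>i<N1. S i = mzero" "\<forall>i<N2. T i = mzero"
    using assms unfolding bounded_below_def by blast
  then have "{i. S i \<noteq> mzero \<and> T (k - i) \<noteq> mzero} \<subseteq> {N1..k - N2}"
    by (auto simp: not_less[symmetric])
  then show ?thesis unfolding smul_finite_def by (rule finite_subset) simp
qed

lemma smul_finite_bounded_above:
  assumes "bounded_above S" "bounded_above T"
  shows "smul_finite S T k"
proof -
  obtain N1 N2 where "\<forall>i>N1. S i = mzero" "\<forall>i>N2. T i = mzero"
    using assms unfolding bounded_above_def by blast
  then have "{i. S i \<noteq> mzero \<and> T (k - i) \<noteq> mzero} \<subseteq> {k - N2..N1}"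
    by (auto simp: not_less[symmetric])
  then show ?thesis unfolding smul_finite_def by (rule finite_subset) simp
qed

lemma smul_finite_finite_support:
  assumes "finite {i. S i \<noteq> mzero}"
  shows "smul_finite S T k" "smul_finite T S k"
proof -
  show "smul_finite S T k"
    using assms unfolding smul_finite_def by (auto elim: rev_finite_subset)
  then show "smul_finite T S k" by (rule smul_finite_commute)
qed

lemma finite_support_srestrict_neg:
  assumes "bounded_below S"
  shows "finite {i. srestrict (- {0..}) S i \<noteq> mzero}"
proof -
  obtain N where "\<forall>i<N. S i = mzero" using assms unfolding bounded_below_def by blast
  then have "{i. srestrict (- {0..}) S i \<noteq> mzero} \<subseteq> {N..0}"
    by (auto simp: srestrict_def not_less[symmetric])
  then show ?thesis by (rule finite_subset) simp
qed

lemma finite_support_srestrict_nonneg: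
  assumes "bounded_above S"
  shows "finite {i. srestrict {0..} S i \<noteq> mzero}"
proof -
  obtain N where "\<forall>i>N. S i = mzero" using assms unfolding bounded_above_def by blast
  then have "{i. srestrict {0..} S i \<noteq> mzero} \<subseteq> {0..N}"
    by (auto simp: srestrict_def not_less[symmetric])
  then show ?thesis by (rule finite_subset) simp
qed

lemma smul_split_left:
  assumes "smul_finite S T k"
  shows "smul S T k a b = smul (srestrict K S) T k a b + smul (srestrict (- K) S) T k a b"
proof -
  let ?A = "{i. S i \<noteq> mzero \<and> T (k - i) \<noteq> mzero}"
  have fin: "finite ?A" using assms by (simp add: smul_finite_def)
  have "smul S' T k a b = (\<Sum>i\<in>?A. mmul (S' i) (T (k - i)) a b)"
    if "S' \<in> {S, srestrict K S, srestrict (- K) S}" for S'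
    by (rule smul_eq_sum[OF fin]) (use that in \<open>auto simp: srestrict_def split: if_splits\<close>)
  then show ?thesis
    by (simp flip: sum.distrib) (auto simp: srestrict_def intro: sum.cong)
qed

lemma smul_split_right:
  assumes "smul_finite S T k"
  shows "smul S T k a b = smul S (srestrict K T) k a b + smul S (srestrict (- K) T) k a b"
proof -
  let ?A = "{i. S i \<noteq> mzero \<and> T (k - i) \<noteq> mzero}"
  have fin: "finite ?A" using assms by (simp add: smul_finite_def)
  have "smul S T' k a b = (\<Sum>i\<in>?A. mmul (S i) (T' (k - i)) a b)"
    if "T' \<in> {T, srestrict K T, srestrict (- K) T}" for T'
    by (rule smul_eq_sum[OF fin]) (use that in \<open>auto simp: srestrict_def split: if_splits\<close>)
  then show ?thesis
    by (simp flip: sum.distrib) (auto simp: srestrict_def intro: sum.cong)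
qed

lemma zero_curvature_commuting:
  fixes X Y :: "('a::comm_ring_1,'n::finite) ser"
  assumes closed: "add_closed K" "add_closed (- K)"
    and fin: "\<And>k. smul_finite X Y k" and comm: "smul X Y = smul Y X"
  shows "sdiff (sdiff (srestrict K (sbracket (srestrict K X) Y)) (srestrict K (sbracket (srestrict K Y) X)))
           (sbracket (srestrict K X) (srestrict K Y)) = szero"
proof (intro ext)
  fix k :: int and a b :: 'n
  let ?P = "srestrict K" and ?N = "srestrict (- K)"
  let ?p = "\<lambda>S T. smul S T k a b"
  show "sdiff (sdiff (?P (sbracket (?P X) Y)) (?P (sbracket (?P Y) X))) (sbracket (?P X) (?P Y)) k a b
      = szero k a b"
  proof (cases "k \<in> K")
    case False
    then show ?thesis
      by (simp add: sdiff_def szero_def sbracket_def smul_srestrict_eq_mzero[OF closed(1)])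
  next
    case True
    have fin': "smul_finite Y X k" "smul_finite (?P X) Y k" "smul_finite Y (?P X) k"
      "smul_finite (?P Y) X k" "smul_finite X (?P Y) k"
      using fin smul_finite_commute smul_finite_srestrict by blast+
    have XY: "?p X Y = ?p (?P X) (?P Y) + ?p (?P X) (?N Y) + ?p (?N X) (?P Y) + ?p (?N X) (?N Y)"
      using smul_split_left[OF fin, where K=K] smul_split_right[OF smul_finite_srestrict(1)[OF fin], where K=K]
      by simp
    have YX: "?p Y X = ?p (?P Y) (?P X) + ?p (?P Y) (?N X) + ?p (?N Y) (?P X) + ?p (?N Y) (?N X)"
      using smul_split_left[OF fin'(1), where K=K] smul_split_right[OF smul_finite_srestrict(1)[OF fin'(1)], where K=K]
      by simp
    have NN: "?p (?N X) (?N Y) = 0" "?p (?N Y) (?N X) = 0"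
      using True by (simp_all add: smul_srestrict_eq_mzero[OF closed(2)])
    have "sdiff (sdiff (?P (sbracket (?P X) Y)) (?P (sbracket (?P Y) X))) (sbracket (?P X) (?P Y)) k a b
      = (?p (?P X) (?P Y) + ?p (?P X) (?N Y) + ?p (?N X) (?P Y))
        - (?p (?P Y) (?P X) + ?p (?P Y) (?N X) + ?p (?N Y) (?P X))"
      unfolding sdiff_def sbracket_def srestrict_in[OF True] smul_split_right[OF fin'(2), where K=K]
        smul_split_left[OF fin'(3), where K=K] smul_split_right[OF fin'(4), where K=K]
        smul_split_left[OF fin'(5), where K=K]
      by (simp add: algebra_simps)
    also have "\<dots> = ?p X Y - ?p Y X"
      using XY YX NN by simp
    also have "\<dots> = 0"
      using comm by simp
    finally show ?thesis by (simp add: szero_def)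
  qed
qed

lemma zero_curvature_mixed:
  fixes X Y :: "('a::comm_ring_1,'n::finite) ser"
  assumes closed: "add_closed K" "add_closed (- K)"
    and fin: "finite {i. srestrict (- K) X i \<noteq> mzero}" "finite {i. srestrict K Y i \<noteq> mzero}"
  shows "sdiff (sdiff (srestrict K (sbracket (srestrict (- K) X) Y)) (srestrict (- K) (sbracket (srestrict K Y) X)))
           (sbracket (srestrict (- K) X) (srestrict K Y)) = szero"
proof (intro ext)
  fix k :: int and a b :: 'n
  let ?P = "srestrict K" and ?N = "srestrict (- K)"
  let ?p = "\<lambda>S T. smul S T k a b"
  have fin': "smul_finite (?N X) Y k" "smul_finite Y (?N X) k" "smul_finite (?P Y) X k" "smul_finite X (?P Y) k"
    using smul_finite_finite_support fin by blast+
  show "sdiff (sdiff (?P (sbracket (?N X) Y)) (?N (sbracket (?P Y) X))) (sbracket (?N X) (?P Y)) k a b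
      = szero k a b"
  proof (cases "k \<in> K")
    case True
    then have "k \<notin> - K" by simp
    then have "sdiff (sdiff (?P (sbracket (?N X) Y)) (?N (sbracket (?P Y) X))) (sbracket (?N X) (?P Y)) k a b
        = ?p (?N X) (?N Y) - ?p (?N Y) (?N X)"
      unfolding sdiff_def sbracket_def srestrict_in[OF True] srestrict_notin[OF \<open>k \<notin> - K\<close>]
        smul_split_right[OF fin'(1), where K=K] smul_split_left[OF fin'(2), where K=K]
      by (simp add: algebra_simps)
    also have "\<dots> = 0"
      using \<open>k \<notin> - K\<close> by (simp add: smul_srestrict_eq_mzero[OF closed(2)])
    finally show ?thesis by (simp add: szero_def)
  next
    case False
    then have "k \<in> - K" by simp
    then have "sdiff (sdiff (?P (sbracket (?N X) Y)) (?N (sbracket (?P Y) X))) (sbracket (?N X) (?P Y)) k a b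
        = ?p (?P X) (?P Y) - ?p (?P Y) (?P X)"
      unfolding sdiff_def sbracket_def srestrict_notin[OF False] srestrict_in[OF \<open>k \<in> - K\<close>]
        smul_split_right[OF fin'(3), where K=K] smul_split_left[OF fin'(4), where K=K]
      by (simp add: algebra_simps)
    also have "\<dots> = 0"
      using False by (simp add: smul_srestrict_eq_mzero[OF closed(1)])
    finally show ?thesis by (simp add: szero_def)
  qed
qed

lemma sapply_srestrict_sshift:
  "d 0 = 0 \<Longrightarrow> sapply d (srestrict K (sshift S m)) = srestrict K (sshift (sapply d S) m)"
  by (auto simp: sapply_def srestrict_def sshift_def mzero_def)

lemma lax_srestrict_sshift:
  assumes "d 0 = 0" "sapply d S = sbracket L S"
  shows "sapply d (srestrict K (sshift S m)) = srestrict K (sbracket L (sshift S m))"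
  using assms by (simp add: sapply_srestrict_sshift sbracket_sshift_right)

lemma zero_curvature_lax_commuting:
  fixes X Y :: "('a::comm_ring_1,'n::finite) ser"
  assumes closed: "add_closed K" "add_closed (- K)"
    and d0: "d1 0 = 0" "d2 0 = 0"
    and lax: "sapply d1 Y = sbracket (srestrict K (sshift X m1)) Y"
      "sapply d2 X = sbracket (srestrict K (sshift Y m2)) X"
    and fin: "\<And>k. smul_finite X Y k" and comm: "smul X Y = smul Y X"
  shows "sdiff (sdiff (sapply d1 (srestrict K (sshift Y m2))) (sapply d2 (srestrict K (sshift X m1))))
           (sbracket (srestrict K (sshift X m1)) (srestrict K (sshift Y m2))) = szero"
proof -
  have "smul (sshift X m1) (sshift Y m2) = smul (sshift Y m2) (sshift X m1)"
    by (simp add: smul_sshift comm add.commute)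
  then show ?thesis
    using zero_curvature_commuting[OF closed smul_finite_sshift[OF fin]]
    by (simp add: lax_srestrict_sshift[OF d0(1) lax(1)] lax_srestrict_sshift[OF d0(2) lax(2)])
qed

lemma zero_curvature_lax_mixed:
  fixes X Y :: "('a::comm_ring_1,'n::finite) ser"
  assumes d0: "d1 0 = 0" "d2 0 = 0"
    and lax: "sapply d1 Y = sbracket (srestrict (- {0..}) (sshift X m1)) Y"
      "sapply d2 X = sbracket (srestrict {0..} (sshift Y m2)) X"
    and bdd: "bounded_below X" "bounded_above Y"
  shows "sdiff (sdiff (sapply d1 (srestrict {0..} (sshift Y m2))) (sapply d2 (srestrict (- {0..}) (sshift X m1))))
           (sbracket (srestrict (- {0..}) (sshift X m1)) (srestrict {0..} (sshift Y m2))) = szero"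
  unfolding lax_srestrict_sshift[OF d0(1) lax(1)] lax_srestrict_sshift[OF d0(2) lax(2)]
  by (rule zero_curvature_mixed[OF add_closed_nonneg add_closed_neg
        finite_support_srestrict_neg finite_support_srestrict_nonneg]) (simp_all add: bdd)

lemma C_derivation_zero: "C_derivation emb d \<Longrightarrow> d 0 = 0"
  unfolding C_derivation_def by (metis add_cancel_right_right add_0)

lemma C_algebra_map_zero: "C_algebra_map emb \<Longrightarrow> emb 0 = 0"
  unfolding C_algebra_map_def by (metis add_cancel_right_right add_0)

lemma C_algebra_map_sum: "C_algebra_map emb \<Longrightarrow> emb (\<Sum>i\<in>A. f i) = (\<Sum>i\<in>A. emb (f i))"
  by (induction A rule: infinite_finite_induct) (auto simp: C_algebra_map_zero C_algebra_map_def)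

lemma mmul_cmat: "C_algebra_map emb \<Longrightarrow> mmul (cmat emb A) (cmat emb B) = cmat emb (mmul A B)"
  unfolding mmul_def cmat_def by (intro ext) (simp add: C_algebra_map_sum, simp add: C_algebra_map_def)

lemma max_comm_basis_commute:
  "max_comm_basis E r \<Longrightarrow> a \<in> {1..r} \<Longrightarrow> b \<in> {1..r} \<Longrightarrow> mmul (E a) (E b) = mmul (E b) (E a)"
  unfolding max_comm_basis_def comm_sl_basis_def by blast

lemma smul_sconst_cmat_commute:
  assumes "C_algebra_map emb" "mmul A B = mmul B A"
  shows "smul (sconst (cmat emb A)) (sconst (cmat emb B)) = smul (sconst (cmat emb B)) (sconst (cmat emb A))"
  using assms by (simp add: smul_sconst mmul_cmat)

lemma deformation_U:
  assumes alg: "C_algebra_map emb" and t: "max_comm_basis E r"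
    and def: "deformation emb E r U W" and a: "a \<in> {1..r}" "a' \<in> {1..r}"
  shows "smul (U a) (U a') = smul (U a') (U a)" "bounded_above (U a)"
proof -
  from def obtain g g' where g: "G_lt0 g" "G_lt0 g'" "smul g' g = sone"
      and U: "\<And>a. a \<in> {1..r} \<Longrightarrow> U a = smul (smul g (sconst (cmat emb (E a)))) g'"
    unfolding deformation_def by blast
  have bdd: "bounded_above g" "bounded_above g'"
    using g(1,2) unfolding G_lt0_def bounded_above_def by auto
  have reflect_U: "sreflect (U c) = smul (smul (sreflect g) (sconst (cmat emb (E c)))) (sreflect g')"
    if "c \<in> {1..r}" for c
    by (simp add: U[OF that] flip: smul_sreflect)
  have "smul (sreflect g') (sreflect g) = sone"
    using g(3) by (simp add: smul_sreflect)
  then have "smul (sreflect (U a)) (sreflect (U a')) = smul (sreflect (U a')) (sreflect (U a))"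
    unfolding reflect_U[OF a(1)] reflect_U[OF a(2)] using bdd
    by (intro smul_conj_commute smul_sconst_cmat_commute[OF alg max_comm_basis_commute[OF t a]])
      (simp_all add: bounded_above_iff_sreflect)
  then show "smul (U a) (U a') = smul (U a') (U a)"
    by (metis smul_sreflect sreflect_sreflect)
  show "bounded_above (U a)"
    using bdd by (simp add: U[OF a(1)])
qed

lemma deformation_W:
  assumes alg: "C_algebra_map emb" and t: "max_comm_basis E r"
    and def: "deformation emb E r U W" and b: "b \<in> {1..r}" "b' \<in> {1..r}"
  shows "smul (W b) (W b') = smul (W b') (W b)" "bounded_below (W b)"
proof -
  from def obtain X X' where X: "G_ge0 X" "G_ge0 X'" "smul X' X = sone"
      and W: "\<And>b. b \<in> {1..r} \<Longrightarrow> W b = smul (smul X (sshift (sconst (cmat emb (E b))) (-1))) X'"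
    unfolding deformation_def by blast
  have bdd: "bounded_below X" "bounded_below X'"
    using X(1,2) unfolding G_ge0_def bounded_below_def by auto
  have "smul (sshift (sconst (cmat emb (E b))) (-1)) (sshift (sconst (cmat emb (E b'))) (-1))
      = smul (sshift (sconst (cmat emb (E b'))) (-1)) (sshift (sconst (cmat emb (E b))) (-1))"
    by (simp add: smul_sshift smul_sconst_cmat_commute[OF alg max_comm_basis_commute[OF t b]])
  then show "smul (W b) (W b') = smul (W b') (W b)"
    unfolding W[OF b(1)] W[OF b(2)] using bdd X(3) by (intro smul_conj_commute) simp_all
  show "bounded_below (W b)"
    using bdd by (simp add: W[OF b(1)])
qed

theorem proposition3p1:
  fixes emb :: "complex \<Rightarrow> 'a::comm_ring_1"
    and D :: "int \<Rightarrow> nat \<Rightarrow> 'a \<Rightarrow> 'a"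
    and E :: "nat \<Rightarrow> (complex,'n::finite) mat"
    and r :: nat
    and U W :: "nat \<Rightarrow> ('a,'n) ser"
    and B C :: "int \<Rightarrow> nat \<Rightarrow> ('a,'n) ser"
  assumes alg: "C_algebra_map emb"
    and der: "\<And>m a. a \<in> {1..r} \<Longrightarrow> C_derivation emb (D m a)"
    and comm: "\<And>m1 a1 m2 a2 x. a1 \<in> {1..r} \<Longrightarrow> a2 \<in> {1..r} \<Longrightarrow>
                 D m1 a1 (D m2 a2 x) = D m2 a2 (D m1 a1 x)"
    and t: "max_comm_basis E r"
    and sol: "hierarchy_solution emb D E r U W"
    and B_def: "\<And>m a. m \<ge> 0 \<Longrightarrow> B m a = pi_ge0 (sshift (U a) m)"
    and C_def: "\<And>m b. m < 0 \<Longrightarrow> C m b = pi_lt0 (sshift (W b) (m + 1))"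
  shows "(\<forall>m1<0. \<forall>m2\<ge>0. \<forall>b1\<in>{1..r}. \<forall>a2\<in>{1..r}.
            sdiff (sdiff (sapply (D m1 b1) (B m2 a2)) (sapply (D m2 a2) (C m1 b1)))
                  (sbracket (C m1 b1) (B m2 a2)) = szero) \<and>
         (\<forall>m1\<ge>0. \<forall>m2\<ge>0. \<forall>a1\<in>{1..r}. \<forall>a2\<in>{1..r}.
            sdiff (sdiff (sapply (D m1 a1) (B m2 a2)) (sapply (D m2 a2) (B m1 a1)))
                  (sbracket (B m1 a1) (B m2 a2)) = szero) \<and>
         (\<forall>m1<0. \<forall>m2<0. \<forall>b1\<in>{1..r}. \<forall>b2\<in>{1..r}.
            sdiff (sdiff (sapply (D m1 b1) (C m2 b2)) (sapply (D m2 b2) (C m1 b1)))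
                  (sbracket (C m1 b1) (C m2 b2)) = szero)"
proof -
  have def: "deformation emb E r U W"
    and lax: "\<And>m a1 a2. m \<ge> 0 \<Longrightarrow> a1 \<in> {1..r} \<Longrightarrow> a2 \<in> {1..r} \<Longrightarrow>
        sapply (D m a1) (U a2) = sbracket (srestrict {0..} (sshift (U a1) m)) (U a2)"
      "\<And>m a b. m \<ge> 0 \<Longrightarrow> a \<in> {1..r} \<Longrightarrow> b \<in> {1..r} \<Longrightarrow>
        sapply (D m a) (W b) = sbracket (srestrict {0..} (sshift (U a) m)) (W b)"
      "\<And>m b1 b2. m < 0 \<Longrightarrow> b1 \<in> {1..r} \<Longrightarrow> b2 \<in> {1..r} \<Longrightarrow>
        sapply (D m b1) (W b2) = sbracket (srestrict (- {0..}) (sshift (W b1) (m + 1))) (W b2)"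
      "\<And>m b a. m < 0 \<Longrightarrow> b \<in> {1..r} \<Longrightarrow> a \<in> {1..r} \<Longrightarrow>
        sapply (D m b) (U a) = sbracket (srestrict (- {0..}) (sshift (W b) (m + 1))) (U a)"
    using sol unfolding hierarchy_solution_def pi_ge0_eq_srestrict pi_lt0_eq_srestrict by blast+
  note d0 = C_derivation_zero[OF der]
  note U = deformation_U[OF alg t def] and W = deformation_W[OF alg t def]
  show ?thesis
  proof (intro conjI allI impI ballI)
    fix m1 m2 :: int and b1 a2 assume "m1 < 0" "m2 \<ge> 0" "b1 \<in> {1..r}" "a2 \<in> {1..r}"
    then show "sdiff (sdiff (sapply (D m1 b1) (B m2 a2)) (sapply (D m2 a2) (C m1 b1)))
        (sbracket (C m1 b1) (B m2 a2)) = szero"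
      unfolding B_def[OF \<open>m2 \<ge> 0\<close>] C_def[OF \<open>m1 < 0\<close>] pi_ge0_eq_srestrict pi_lt0_eq_srestrict
      by (intro zero_curvature_lax_mixed d0 lax U W)
  next
    fix m1 m2 :: int and a1 a2 assume "m1 \<ge> 0" "m2 \<ge> 0" "a1 \<in> {1..r}" "a2 \<in> {1..r}"
    then show "sdiff (sdiff (sapply (D m1 a1) (B m2 a2)) (sapply (D m2 a2) (B m1 a1)))
        (sbracket (B m1 a1) (B m2 a2)) = szero"
      unfolding B_def[OF \<open>m1 \<ge> 0\<close>] B_def[OF \<open>m2 \<ge> 0\<close>] pi_ge0_eq_srestrict
      by (intro zero_curvature_lax_commuting add_closed_nonneg add_closed_neg d0 lax U
          smul_finite_bounded_above)
  next
    fix m1 m2 :: int and b1 b2 assume "m1 < 0" "m2 < 0" "b1 \<in> {1..r}" "b2 \<in> {1..r}"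
    then show "sdiff (sdiff (sapply (D m1 b1) (C m2 b2)) (sapply (D m2 b2) (C m1 b1)))
        (sbracket (C m1 b1) (C m2 b2)) = szero"
      unfolding C_def[OF \<open>m1 < 0\<close>] C_def[OF \<open>m2 < 0\<close>] pi_lt0_eq_srestrict
      by (intro zero_curvature_lax_commuting add_closed_neg d0 lax W smul_finite_bounded_below)
        (simp add: add_closed_nonneg)
  qed
qed

end
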